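(* Let $K$ be a field, $c\in K\setminus\{0\}$, $n\ge1$, let $f,g$ be $c$-friezes of order $n$ over $K$, and let $\Sigma\subseteq\mathbb{B}_n$ be a section. Suppose that $f(p)=g(p)$ for all $p\in\Sigma$ and that $f(p)\neq0$ for every $p=(i,j)\in\Sigma$ with $-1\le j-i\le n$ (i.e. every point of $\Sigma$ in rows $0,\dots,n+1$). Then $f=g$.
   Context: The $c$-continuant polynomials $P_k=P_k^c$ ($k\ge-1$) are defined by $P_{-1}=0$, $P_0=1$, and for $k\ge1$, $P_k(x_1,\dots,x_k)=x_kP_{k-1}(x_1,\dots,x_{k-1})+cP_{k-2}(x_1,\dots,x_{k-2})$. A family $(x_i)_{i\in\mathbb{Z}}$ in $K$ is $n$-admissible if $P_{n+2}(x_i,\dots,x_{i+n+1})=0$ for all $i$. Let $\mathbb{B}_n=\{(i,j)\in\mathbb{Z}^2:-2\le j-i\le n+1\}$; the point $(i,j)$ lies in row $j-i+1$ (rows $-1,\dots,n+2$). A $c$-frieze of order $n$ is a function $f:\mathbb{B}_n\to K$ for which there is an $n$-admissible family $(x_i)$ with $f(i,j)=P_{j-i+1}(x_i,\dots,x_j)$ for all $(i,j)\in\mathbb{B}_n$ (rows $-1$ and $n+2$ are identically $0$, row $0$ identically $1$). A section is a subset $\Sigma\subseteq\mathbb{B}_n$ with $|\Sigma|=n+4$ such that for every $(i_0,j_0)\in\Sigma$: (a) if $(i_0,j_0-1)$ and $(i_0+1,j_0)$ lie in $\mathbb{B}_n$, at least one of them is in $\Sigma$; (b) if $(i_0-1,j_0)$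 and $(i_0,j_0+1)$ lie in $\mathbb{B}_n$, at least one of them is in $\Sigma$. *)

theory Defs
  imports Main
begin

(* c-continuant evaluated on the REVERSED argument list:
   contr c [x_k, ..., x_1] = P_k(x_1,...,x_k) for k >= 0 *)
fun contr :: "'a::field \<Rightarrow> 'a list \<Rightarrow> 'a" where
  "contr c [] = 1"
| "contr c [x] = x"
| "contr c (x # y # ys) = x * contr c (y # ys) + c * contr c ys"

definition contP :: "'a::field \<Rightarrow> int \<Rightarrow> 'a list \<Rightarrow> 'a" where
  "contP c k xs = (if k < 0 then 0 else contr c (rev xs))"

definition contF :: "'a::field \<Rightarrow> int \<Rightarrow> (int \<Rightarrow> 'a) \<Rightarrow> int \<Rightarrow> 'a" where
  "contF c k x i = contP c k (map x [i..i+k-1])"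

definition admissible :: "'a::field \<Rightarrow> nat \<Rightarrow> (int \<Rightarrow> 'a) \<Rightarrow> bool" where
  "admissible c n x \<longleftrightarrow> (\<forall>i. contF c (int n + 2) x i = 0)"

definition stripB :: "nat \<Rightarrow> (int \<times> int) set" where
  "stripB n = {(i, j). -2 \<le> j - i \<and> j - i \<le> int n + 1}"

definition is_frieze :: "'a::field \<Rightarrow> nat \<Rightarrow> (int \<times> int \<Rightarrow> 'a) \<Rightarrow> bool" where
  "is_frieze c n f \<longleftrightarrow> (\<exists>x. admissible c n x \<and>
      (\<forall>(i, j) \<in> stripB n. f (i, j) = contF c (j - i + 1) x i))"

definition is_section :: "nat \<Rightarrow> (int \<times> int) set \<Rightarrow> bool" where
  "is_section n S \<longleftrightarrow> S \<subseteq> stripB n \<and> finite S \<and> card S = n + 4 \<and>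
     (\<forall>(i, j) \<in> S.
        ((i, j - 1) \<in> stripB n \<and> (i + 1, j) \<in> stripB n \<longrightarrow> (i, j - 1) \<in> S \<or> (i + 1, j) \<in> S) \<and>
        ((i - 1, j) \<in> stripB n \<and> (i, j + 1) \<in> stripB n \<longrightarrow> (i - 1, j) \<in> S \<or> (i, j + 1) \<in> S))"

end

theory Submission
  imports Defs
begin

text \<open>Let \<open>x\<close> and \<open>y\<close> be admissible families representing \<open>f\<close> and \<open>g\<close>. A section
contains a point in row 0, and condition (b) lets us climb from it, one row at a time, to row
\<open>n + 1\<close>. Each climb adds one entry at one end of the window of the continuant, and that entry
appears with the previous continuant, nonzero by hypothesis, as coefficient; so agreement of
\<open>f\<close> and \<open>g\<close> on the section forces \<open>x\<close> and \<open>y\<close> to agree on \<open>n + 1\<close> consecutive indices.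
By the determinant identity, \<open>P_{n+1}\<close> never vanishes on an admissible family when
\<open>c \<noteq> 0\<close>, so the same cancellation applied to \<open>P_{n+2} = 0\<close> propagates the agreement to
all indices.\<close>

fun cont :: "'a::field \<Rightarrow> (int \<Rightarrow> 'a) \<Rightarrow> int \<Rightarrow> nat \<Rightarrow> 'a" where
  "cont c x i 0 = 1"
| "cont c x i (Suc 0) = x i"
| "cont c x i (Suc (Suc m)) = x (i + int m + 1) * cont c x i (Suc m) + c * cont c x i m"

lemma contr_rev_map_upto: "contr c (rev (map x [i..i + int m - 1])) = cont c x i m"
proof (induction c x i m rule: cont.induct)
  case (3 c x i m)
  have "[i..i + int m + 1] = [i..i + int m - 1] @ [i + int m, i + int m + 1]"
    using upto_rec2[of i "i + int m + 1"] upto_rec2[of i "i + int m"] by simp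
  moreover have "[i..i + int m] = [i..i + int m - 1] @ [i + int m]"
    using upto_rec2[of i "i + int m"] by simp
  ultimately show ?case
    using 3 by (simp add: algebra_simps)
qed simp_all

lemma contF_eq_cont: "contF c (int m) x i = cont c x i m"
  unfolding contF_def contP_def using contr_rev_map_upto by simp

lemma cont_cong: "(\<And>k. i \<le> k \<Longrightarrow> k < i + int m \<Longrightarrow> x k = y k) \<Longrightarrow> cont c x i m = cont c y i m"
  by (induction c x i m rule: cont.induct) auto

lemma cont_Suc_Suc_left:
  "cont c x i (Suc (Suc m)) = x i * cont c x (i + 1) (Suc m) + c * cont c x (i + 2) m"
proof (induction m rule: less_induct)
  case (less m)
  show ?case
  proof (cases m)
    case (Suc k)
    show ?thesis
    proof (cases k)
      case (Suc l)
      have m: "m = Suc (Suc l)" using \<open>m = Suc k\<close> Suc by simp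
      have "cont c x i (Suc (Suc m)) =
          x (i + int l + 3) * cont c x i (Suc (Suc (Suc l))) + c * cont c x i (Suc (Suc l))"
        "cont c x (i + 1) (Suc m) =
          x (i + int l + 3) * cont c x (i + 1) (Suc (Suc l)) + c * cont c x (i + 1) (Suc l)"
        "cont c x (i + 2) m = x (i + int l + 3) * cont c x (i + 2) (Suc l) + c * cont c x (i + 2) l"
        unfolding m by (simp only: cont.simps; simp add: algebra_simps)+
      with less[of "Suc l"] less[of l] m show ?thesis
        by (simp del: cont.simps add: algebra_simps)
    qed (use Suc in \<open>simp add: algebra_simps\<close>)
  qed (simp add: algebra_simps)
qed

lemma cont_det:
  "cont c x i (Suc m) * cont c x (i + 1) (Suc m) - cont c x i (Suc (Suc m)) * cont c x (i + 1) m
     = (- c) ^ Suc m"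
proof (induction m)
  case (Suc m)
  have "cont c x i (Suc (Suc (Suc m))) =
      x (i + int m + 2) * cont c x i (Suc (Suc m)) + c * cont c x i (Suc m)"
    "cont c x (i + 1) (Suc (Suc m)) =
      x (i + int m + 2) * cont c x (i + 1) (Suc m) + c * cont c x (i + 1) m"
    by (simp only: cont.simps; simp add: algebra_simps)+
  then have "cont c x i (Suc (Suc m)) * cont c x (i + 1) (Suc (Suc m))
      - cont c x i (Suc (Suc (Suc m))) * cont c x (i + 1) (Suc m)
    = - c * (cont c x i (Suc m) * cont c x (i + 1) (Suc m)
      - cont c x i (Suc (Suc m)) * cont c x (i + 1) m)"
    by (simp del: cont.simps add: algebra_simps)
  with Suc show ?case by simp
qed (simp add: algebra_simps)

lemma admissible_cont_zero: "admissible c n x \<Longrightarrow> cont c x i (n + 2) = 0"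
  unfolding admissible_def using contF_eq_cont[of c "n + 2" x i] by (simp add: add.commute)

lemma admissible_cont_nonzero:
  assumes "c \<noteq> 0" and "admissible c n x"
  shows "cont c x i (Suc n) \<noteq> 0"
proof
  assume "cont c x i (Suc n) = 0"
  moreover have "cont c x (i - 1) (Suc (Suc n)) = 0"
    using admissible_cont_zero[OF assms(2)] by (simp del: cont.simps)
  ultimately have "(- c) ^ Suc n = 0"
    using cont_det[of c x "i - 1" n] by (simp del: cont.simps)
  with assms(1) show False by simp
qed

text \<open>The shorter continuant is the coefficient of the new entry, so it can be cancelled.\<close>

lemma cont_extend_right:
  assumes "cont c x i m \<noteq> 0"
    and "\<And>k. i \<le> k \<Longrightarrow> k < i + int m \<Longrightarrow> x k = y k"
    and "cont c x i (Suc m) = cont c y i (Suc m)"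
  shows "x (i + int m) = y (i + int m)"
proof (cases m)
  case (Suc l)
  have "cont c x i l = cont c y i l" "cont c x i m = cont c y i m"
    using assms(2) by (auto intro: cont_cong simp: Suc)
  moreover have "cont c x i (Suc m) = x (i + int m) * cont c x i m + c * cont c x i l"
    "cont c y i (Suc m) = y (i + int m) * cont c y i m + c * cont c y i l"
    by (simp_all add: Suc add.assoc add.commute[of 1])
  ultimately show ?thesis
    using assms(1,3) by simp
qed (use assms(3) in simp)

lemma cont_extend_left:
  assumes "cont c x (i + 1) m \<noteq> 0"
    and "\<And>k. i < k \<Longrightarrow> k \<le> i + int m \<Longrightarrow> x k = y k"
    and "cont c x i (Suc m) = cont c y i (Suc m)"
  shows "x i = y i"
proof (cases m)
  case (Suc l)
  have "cont c x (i + 2) l = cont c y (i + 2) l" "cont c x (i + 1) m = cont c y (i + 1) m"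
    using assms(2) by (auto intro: cont_cong simp: Suc)
  with assms(1,3) Suc show ?thesis
    by (simp del: cont.simps add: cont_Suc_Suc_left)
qed (use assms(3) in simp)

lemma admissible_eq_if_agree_window:
  fixes x y :: "int \<Rightarrow> 'a::field"
  assumes c: "c \<noteq> 0" and ax: "admissible c n x" and ay: "admissible c n y"
    and window: "\<And>k. a \<le> k \<Longrightarrow> k \<le> a + int n \<Longrightarrow> x k = y k"
  shows "x = y"
proof -
  have zero: "cont c x j (Suc (Suc n)) = cont c y j (Suc (Suc n))" for j
    using admissible_cont_zero[OF ax] admissible_cont_zero[OF ay] by simp
  have agree: "x k = y k" if "a - int d \<le> k" "k \<le> a + int n + int d" for d k
    using that
  proof (induction d arbitrary: k)
    case (Suc d)
    have IH: "x k = y k" if "a - int d \<le> k" "k \<le> a + int n + int d" for k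
      using Suc.IH that .
    consider "a - int d \<le> k \<and> k \<le> a + int n + int d" | "k = a + int n + int d + 1"
      | "k = a - int d - 1"
      using Suc.prems by linarith
    then show ?case
    proof cases
      case 2
      have "x (a + int d + int (Suc n)) = y (a + int d + int (Suc n))"
        by (rule cont_extend_right[OF admissible_cont_nonzero[OF c ax] _ zero]) (auto intro: IH)
      with 2 show ?thesis by (simp add: algebra_simps)
    next
      case 3
      have "x (a - int d - 1) = y (a - int d - 1)"
        by (rule cont_extend_left[OF admissible_cont_nonzero[OF c ax] _ zero]) (auto intro: IH)
      with 3 show ?thesis by simp
    qed (use IH in blast)
  qed (use window in simp)
  show ?thesis
  proof
    fix k
    show "x k = y k"
      by (rule agree[of "nat \<bar>k - a\<bar>"]) auto
  qed
qed

lemma is_section_down: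
  assumes "is_section n S" and "(i, j) \<in> S"
    and "(i, j - 1) \<in> stripB n" and "(i + 1, j) \<in> stripB n"
  shows "(i, j - 1) \<in> S \<or> (i + 1, j) \<in> S"
  using assms unfolding is_section_def by blast

lemma is_section_up:
  assumes "is_section n S" and "(i, j) \<in> S"
    and "(i - 1, j) \<in> stripB n" and "(i, j + 1) \<in> stripB n"
  shows "(i - 1, j) \<in> S \<or> (i, j + 1) \<in> S"
  using assms unfolding is_section_def by blast

lemma section_has_row0_point_below:
  assumes "is_section n S" and "(i, i + int d - 1) \<in> S"
  shows "\<exists>a. (a, a - 1) \<in> S"
  using assms(2)
proof (induction d arbitrary: i)
  case (Suc d)
  have "(i, i + int d - 1) \<in> stripB n" "(i + 1, i + int d) \<in> stripB n"
    using Suc.prems assms(1) by (auto simp: is_section_def stripB_def)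
  then have "(i, i + int d - 1) \<in> S \<or> (i + 1, i + 1 + int d - 1) \<in> S"
    using is_section_down[OF assms(1) Suc.prems] by simp
  with Suc.IH show ?case by blast
qed auto

lemma section_has_row0_point:
  assumes "is_section n S"
  shows "\<exists>a. (a, a - 1) \<in> S"
proof -
  have "S \<subseteq> stripB n" "S \<noteq> {}"
    using assms unfolding is_section_def by auto
  then obtain i j where ij: "(i, j) \<in> S" "-2 \<le> j - i"
    by (auto simp: stripB_def)
  show ?thesis
  proof (cases "j = i - 2")
    case True
    then have "(i - 1, i - 1 - 1) \<in> S \<or> (i, i - 1) \<in> S"
      using is_section_up[OF assms ij(1)] by (simp add: stripB_def)
    then show ?thesis by blast
  next
    case False
    with ij have "(i, i + int (nat (j - i + 1)) - 1) \<in> S"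
      by simp
    then show ?thesis
      by (rule section_has_row0_point_below[OF assms])
  qed
qed

lemma section_window_agree:
  assumes sec: "is_section n S"
    and eq: "\<And>i m. (i, i + int m - 1) \<in> S \<Longrightarrow> m \<le> n + 1 \<Longrightarrow> cont c x i m = cont c y i m"
    and nz: "\<And>i m. (i, i + int m - 1) \<in> S \<Longrightarrow> m \<le> n + 1 \<Longrightarrow> cont c x i m \<noteq> 0"
    and "r \<le> n + 1"
  shows "\<exists>a. (a, a + int r - 1) \<in> S \<and> (\<forall>k. a \<le> k \<longrightarrow> k < a + int r \<longrightarrow> x k = y k)"
  using \<open>r \<le> n + 1\<close>
proof (induction r)
  case 0
  then show ?case using section_has_row0_point[OF sec] by auto
next
  case (Suc r)
  then obtain a where aS: "(a, a + int r - 1) \<in> S"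
    and agree: "\<And>k. a \<le> k \<Longrightarrow> k < a + int r \<Longrightarrow> x k = y k"
    by auto
  have nz_a: "cont c x a r \<noteq> 0"
    using nz[OF aS] Suc.prems by simp
  have "(a - 1, a + int r - 1) \<in> stripB n" "(a, a + int r - 1 + 1) \<in> stripB n"
    using Suc.prems by (auto simp: stripB_def)
  then have "(a - 1, a - 1 + int (Suc r) - 1) \<in> S \<or> (a, a + int (Suc r) - 1) \<in> S"
    using is_section_up[OF sec aS] by simp
  then consider (left) "(a - 1, a - 1 + int (Suc r) - 1) \<in> S"
    | (right) "(a, a + int (Suc r) - 1) \<in> S"
    by blast
  then show ?case
  proof cases
    case left
    have "x (a - 1) = y (a - 1)"
      using cont_extend_left[of c x "a - 1" r y] nz_a agree eq[OF left Suc.prems] by simp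
    with agree have "x k = y k" if "a - 1 \<le> k" "k < a - 1 + int (Suc r)" for k
      using that by (cases "k = a - 1") simp_all
    with left show ?thesis by blast
  next
    case right
    have "x (a + int r) = y (a + int r)"
      using cont_extend_right[OF nz_a] agree eq[OF right Suc.prems] by simp
    with agree have "x k = y k" if "a \<le> k" "k < a + int (Suc r)" for k
      using that by (cases "k = a + int r") simp_all
    with right show ?thesis by blast
  qed
qed

lemma frieze_cont:
  assumes "\<forall>(i, j) \<in> stripB n. f (i, j) = contF c (j - i + 1) x i" and "m \<le> n + 2"
  shows "f (i, i + int m - 1) = cont c x i m"
proof -
  have "(i, i + int m - 1) \<in> stripB n"
    using assms(2) by (simp add: stripB_def)
  with assms(1) show ?thesis
    using contF_eq_cont[of c m x i] by auto
qed

theorem mainTheorem4: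
  fixes c :: "'a::field" and n :: nat and f g :: "int \<times> int \<Rightarrow> 'a" and S :: "(int \<times> int) set"
  assumes "c \<noteq> 0" and "n \<ge> 1"
    and "is_frieze c n f" and "is_frieze c n g"
    and "is_section n S"
    and "\<forall>p \<in> S. f p = g p"
    and "\<forall>(i, j) \<in> S. -1 \<le> j - i \<and> j - i \<le> int n \<longrightarrow> f (i, j) \<noteq> 0"
  shows "\<forall>p \<in> stripB n. f p = g p"
proof -
  obtain x where ax: "admissible c n x"
    and fx: "\<forall>(i, j) \<in> stripB n. f (i, j) = contF c (j - i + 1) x i"
    using assms(3) unfolding is_frieze_def by blast
  obtain y where ay: "admissible c n y"
    and gy: "\<forall>(i, j) \<in> stripB n. g (i, j) = contF c (j - i + 1) y i"
    using assms(4) unfolding is_frieze_def by blast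
  have "\<exists>a. (a, a + int (n + 1) - 1) \<in> S \<and> (\<forall>k. a \<le> k \<longrightarrow> k < a + int (n + 1) \<longrightarrow> x k = y k)"
  proof (rule section_window_agree[OF assms(5)])
    fix i m assume "(i, i + int m - 1) \<in> S" "m \<le> n + 1"
    then show "cont c x i m = cont c y i m" "cont c x i m \<noteq> 0"
      using assms(6,7) frieze_cont[OF fx, of m i] frieze_cont[OF gy, of m i] by auto
  qed simp
  then obtain a where "\<forall>k. a \<le> k \<longrightarrow> k < a + int (n + 1) \<longrightarrow> x k = y k"
    by blast
  then have "x = y"
    by (intro admissible_eq_if_agree_window[OF assms(1) ax ay, of a]) simp
  have "f (i, j) = g (i, j)" if "(i, j) \<in> stripB n" for i j
    using bspec[OF fx that] bspec[OF gy that] \<open>x = y\<close> by simp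
  then show ?thesis by auto
qed

end
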